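(* Let $0<p<q$ be coprime integers. Then $\mathbb{M}(\mathrm{ch}_{p/q}(L,LR))=\mathbb{L}(p,q)$. In other words, the modular knot associated with the word $\mathrm{ch}_{p/q}(L,LR)$ is the $(p,q)$-torus knot, i.e. the closure of $(\sigma_1\sigma_2\cdots\sigma_{p-1})^q\in B_p$.
   Context: Christoffel words: for coprime $0<p<q$, the snake graph $S(p/q)$ is the set of unit squares of the $q\times p$ grid (width $q$, height $p$) meeting the diagonal from $(0,0)$ to $(q,p)$. The lower Christoffel word $\mathrm{ch}_{p/q}(A,B)$ is obtained by following the lower boundary path of $S(p/q)$ from $(0,0)$ to $(q,p)$ and writing $A$ for each step one unit to the right and $B$ for each step one unit right followed by one unit up; equivalently, it is the word $w_1\cdots w_q$ with $w_i=B$ if $\lfloor ip/q\rfloor>\lfloor (i-1)p/q\rfloor$ and $w_i=A$ otherwise (e.g. $\mathrm{ch}_{4/7}(A,B)=ABABABB$). $\mathrm{ch}_{p/q}(L,LR)$ denotes the word over $\{L,R\}$ obtained by substituting $A\mapsto L$, $B\mapsto LR$. Modular braid of a word: for a primitive word $W$ (not a proper power of a shorter word) over $\{L,R\}$ of length $m\ge2$, with $\mathrm{cyc}$ moving the first letter to the end, let $\mathrm{rank}_j(W)$ ($1\le j\le m$) be the rank of $\mathrm{cyc}^{j-1}(W)$ among the cyclic permutations of $W$ in ascending lexicographic order with $L<R$, and $\mathrm{rank}_{m+1}(W)=\mathrm{rank}_1(W)$. $\mathbb{M}(W)$ is the $m$-strand braid joining the $\mathrm{rank}_j(W)$-th top point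 to the $\mathrm{rank}_{j+1}(W)$-th bottom point by straight segments ($1\le j\le m$), the strand from a top point whose cyclic permutation begins with $L$ passing over one whose cyclic permutation begins with $R$ at each crossing. Its closure is a modular knot. Lorenz braid $\mathbb{L}(p,q)$: the braid with $p+q$ strands in which the $q$ leftmost top points are joined in order (order-preservingly) to the bottom points $p+1,\dots,p+q$, and the $p$ rightmost top points are joined in order to the bottom points $1,\dots,p$, by straight segments, strands from the left top part passing over strands from the right top part. Braids are compared as geometric braid diagrams. *)

theory Defs
  imports Main
begin

datatype letter = L | R
datatype ab = A | B

fun lex_lt :: "letter list \<Rightarrow> letter list \<Rightarrow> bool" where
  "lex_lt (x # xs) (y # ys) = ((x = L \<and> y = R) \<or> (x = y \<and> lex_lt xs ys))"
| "lex_lt _ _ = False"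

text \<open>cyc moves the first letter to the end, so cyc^k = rotate k.\<close>
definition primitive :: "letter list \<Rightarrow> bool" where
  "primitive W \<longleftrightarrow> \<not> (\<exists>u k. k \<ge> 2 \<and> W = concat (replicate k u))"

definition christoffel :: "nat \<Rightarrow> nat \<Rightarrow> ab list" where
  "christoffel p q = map (\<lambda>i. if (i * p) div q > ((i - 1) * p) div q then B else A) [1..<q+1]"

definition ch_LLR :: "nat \<Rightarrow> nat \<Rightarrow> letter list" where
  "ch_LLR p q = concat (map (\<lambda>x. case x of A \<Rightarrow> [L] | B \<Rightarrow> [L, R]) (christoffel p q))"

text \<open>A braid diagram whose strands are straight segments is recorded as
 (number of strands, set of strands (top point, bottom point),
  set of ordered pairs (s, t) of crossing strands such that s passes over t).\<close>
type_synonym braid = "nat \<times> (nat \<times> nat) set \<times> ((nat \<times> nat) \<times> (nat \<times> nat)) set"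

definition crosses :: "nat \<times> nat \<Rightarrow> nat \<times> nat \<Rightarrow> bool" where
  "crosses s t \<longleftrightarrow> (fst s < fst t \<and> snd s > snd t) \<or> (fst s > fst t \<and> snd s < snd t)"

definition straight_braid :: "nat \<Rightarrow> (nat \<times> nat) set \<Rightarrow> (nat \<times> nat \<Rightarrow> nat \<times> nat \<Rightarrow> bool) \<Rightarrow> braid" where
  "straight_braid n S over = (n, S, {(s, t). s \<in> S \<and> t \<in> S \<and> crosses s t \<and> over s t})"

definition rank :: "letter list \<Rightarrow> nat \<Rightarrow> nat" where
  "rank W k = Suc (card {i. i < length W \<and> lex_lt (rotate i W) (rotate k W)})"

text \<open>Strand j (j = 1..m) joins top point rank_j to bottom point rank_{j+1}, rank_{m+1} = rank_1;
 here indexed by k = j - 1. The strand from a top point whose cyclic permutation begins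
 with L passes over the one whose cyclic permutation begins with R.\<close>
definition modular_braid :: "letter list \<Rightarrow> braid" where
  "modular_braid W = straight_braid (length W)
     {(rank W k, rank W (Suc k mod length W)) | k. k < length W}
     (\<lambda>s t. \<exists>k l. k < length W \<and> l < length W \<and> fst s = rank W k \<and> fst t = rank W l
              \<and> hd (rotate k W) = L \<and> hd (rotate l W) = R)"

definition lorenz_braid :: "nat \<Rightarrow> nat \<Rightarrow> braid" where
  "lorenz_braid p q = straight_braid (p + q)
     ({(i, p + i) | i. 1 \<le> i \<and> i \<le> q} \<union> {(q + i, i) | i. 1 \<le> i \<and> i \<le> p})
     (\<lambda>s t. fst s \<le> q \<and> q < fst t)"

end

theory Submission
  imports Defs "HOL-Number_Theory.Cong"
begin

(* Put n = p + q. The word ch_{p/q}(L,LR) is the mechanical word of slope p/n: its j-th letter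
   is R exactly when floor (jp/n) increases at j. Its k-th cyclic shift is therefore the
   mechanical word with intercept kp mod n, and because these words increase lexicographically
   with the intercept (the first position where the larger intercept crosses an integer decides),
   the rank of the k-th shift is 1 + (kp mod n). As p is invertible mod n, the strands of the
   modular braid join c + 1 to ((c + p) mod n) + 1 for every c < n, and a shift begins with L
   exactly when its rank is at most q: these are the strands and the crossing rule of the
   Lorenz braid L(p,q). *)

lemma div_add_le_Suc_div:
  fixes x p n :: nat
  assumes "p \<le> n"
  shows "(x + p) div n \<le> Suc (x div n)"
proof (cases "n = 0")
  case False
  have "(x + p) div n \<le> (x + n) div n" using assms by (simp add: div_le_mono)
  also have "\<dots> = Suc (x div n)" using div_add_self2[of n x] False by simp
  finally show ?thesis .
qed simp

lemma div_less_div_add_iff: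
  fixes x p n :: nat
  assumes "0 < n"
  shows "x div n < (x + p) div n \<longleftrightarrow> n \<le> x mod n + p"
proof -
  have "(x + p) div n = x div n + (x mod n + p) div n"
    using div_add1_eq[of x p n] div_add1_eq[of "x mod n" p n] by simp
  then show ?thesis using assms by (simp add: div_greater_zero_iff)
qed

lemma bij_betw_mult_mod:
  fixes p n :: nat
  assumes "coprime p n"
  shows "bij_betw (\<lambda>i. i * p mod n) {..<n} {..<n}"
proof -
  have inj: "inj_on (\<lambda>i. i * p mod n) {..<n}"
  proof (rule inj_onI)
    fix i j assume "i \<in> {..<n}" "j \<in> {..<n}" "i * p mod n = j * p mod n"
    then have "[i = j] (mod n)" using cong_mult_rcancel_nat[OF assms] by (simp add: cong_def)
    then show "i = j" using cong_less_modulus_unique_nat \<open>i \<in> {..<n}\<close> \<open>j \<in> {..<n}\<close> by auto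
  qed
  then have "(\<lambda>i. i * p mod n) ` {..<n} = {..<n}" by (intro endo_inj_surj) auto
  with inj show ?thesis unfolding bij_betw_def ..
qed

lemma card_bij_betw_less:
  fixes \<sigma> :: "nat \<Rightarrow> nat"
  assumes "bij_betw \<sigma> {..<n} {..<n}" and "m \<le> n"
  shows "card {i. i < n \<and> \<sigma> i < m} = m"
proof -
  let ?S = "{i. i < n \<and> \<sigma> i < m}"
  have "\<sigma> ` ?S = {..<m}"
  proof
    show "{..<m} \<subseteq> \<sigma> ` ?S"
    proof
      fix y assume "y \<in> {..<m}"
      then have "y \<in> \<sigma> ` {..<n}" using assms bij_betw_imp_surj_on by fastforce
      with \<open>y \<in> {..<m}\<close> show "y \<in> \<sigma> ` ?S" by auto
    qed
  qed auto
  moreover have "inj_on \<sigma> ?S"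
    using bij_betw_imp_inj_on[OF assms(1)] by (rule inj_on_subset) auto
  ultimately show ?thesis using card_image by fastforce
qed

definition jump_word :: "(nat \<Rightarrow> nat) \<Rightarrow> nat \<Rightarrow> letter list" where
  "jump_word a N = map (\<lambda>j. if a j < a (Suc j) then R else L) [0..<N]"

lemma length_jump_word [simp]: "length (jump_word a N) = N"
  by (simp add: jump_word_def)

lemma nth_jump_word [simp]:
  "j < N \<Longrightarrow> jump_word a N ! j = (if a j < a (Suc j) then R else L)"
  by (simp add: jump_word_def)

lemma jump_word_Suc:
  "jump_word a (Suc N) = jump_word a N @ [if a N < a (Suc N) then R else L]"
  by (simp add: jump_word_def)

lemma jump_word_Suc_Cons:
  "jump_word a (Suc N) = (if a 0 < a 1 then R else L) # jump_word (\<lambda>j. a (Suc j)) N"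
  by (simp add: jump_word_def upt_conv_Cons map_Suc_upt[symmetric] del: upt_Suc)

text \<open>Where b first overtakes a, a does not jump (b jumps by at most one) while b does.\<close>
lemma lex_lt_jump_word:
  fixes a b :: "nat \<Rightarrow> nat"
  assumes "mono a" and "\<And>j. a j \<le> b j" and "\<And>j. b (Suc j) \<le> Suc (b j)"
    and "a 0 = b 0" and "a i < b i" and "i \<le> N"
  shows "lex_lt (jump_word a N) (jump_word b N)"
  using assms
proof (induction i arbitrary: a b N)
  case 0
  then show ?case by simp
next
  case (Suc i)
  obtain N' where N: "N = Suc N'" using Suc.prems(6) by (cases N) auto
  show ?case
  proof (cases "a 1 < b 1")
    case True
    then have "a 1 \<le> a 0" using Suc.prems(3)[of 0] Suc.prems(4) by simp
    moreover have "b 0 < b 1" using True Suc.prems(4) monoD[OF Suc.prems(1), of 0 1] by simp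
    ultimately show ?thesis unfolding N jump_word_Suc_Cons by simp
  next
    case False
    then have "a 1 = b 1" using Suc.prems(2)[of 1] by simp
    moreover have "lex_lt (jump_word (\<lambda>j. a (Suc j)) N') (jump_word (\<lambda>j. b (Suc j)) N')"
    proof (rule Suc.IH)
      show "mono (\<lambda>j. a (Suc j))" by (intro monoI) (simp add: monoD[OF Suc.prems(1)])
      show "a (Suc j) \<le> b (Suc j)" for j by (rule Suc.prems(2))
      show "b (Suc (Suc j)) \<le> Suc (b (Suc j))" for j by (rule Suc.prems(3))
    qed (use \<open>a 1 = b 1\<close> Suc.prems(5,6) N in auto)
    ultimately show ?thesis unfolding N jump_word_Suc_Cons using Suc.prems(4) by simp
  qed
qed

definition mechanical_word :: "nat \<Rightarrow> nat \<Rightarrow> nat \<Rightarrow> letter list" where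
  "mechanical_word p n c = jump_word (\<lambda>j. (c + j * p) div n) n"

lemma length_mechanical_word [simp]: "length (mechanical_word p n c) = n"
  by (simp add: mechanical_word_def)

lemma nth_mechanical_word:
  assumes "j < n"
  shows "mechanical_word p n c ! j = (if n \<le> (c + j * p) mod n + p then R else L)"
proof -
  have "c + Suc j * p = (c + j * p) + p" by simp
  then show ?thesis using assms div_less_div_add_iff[of n "c + j * p" p]
    by (simp add: mechanical_word_def algebra_simps)
qed

lemma mechanical_word_mod: "mechanical_word p n (c mod n) = mechanical_word p n c"
  by (rule nth_equalityI) (simp_all add: nth_mechanical_word mod_simps)

lemma rotate_mechanical_word:
  "rotate k (mechanical_word p n c) = mechanical_word p n (c + k * p)"
proof (rule nth_equalityI)
  fix j assume "j < length (rotate k (mechanical_word p n c))"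
  then have j: "j < n" by simp
  have "(c + (k + j) mod n * p) mod n = (c + (k + j) * p) mod n"
    by (metis mod_add_right_eq mod_mult_left_eq)
  also have "\<dots> = (c + k * p + j * p) mod n"
    by (simp add: algebra_simps)
  finally have "(c + (k + j) mod n * p) mod n = (c + k * p + j * p) mod n" .
  then show "rotate k (mechanical_word p n c) ! j = mechanical_word p n (c + k * p) ! j"
    using j by (simp add: nth_rotate nth_mechanical_word)
qed simp

lemma hd_mechanical_word:
  assumes "0 < n"
  shows "hd (mechanical_word p n c) = (if n \<le> c mod n + p then R else L)"
proof -
  have "mechanical_word p n c \<noteq> []" using assms by (auto simp flip: length_0_conv)
  then show ?thesis using nth_mechanical_word[OF assms, of p c] by (simp add: hd_conv_nth)
qed

lemma ex_div_less_div:
  fixes p n c c' :: nat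
  assumes "coprime p n" and "c < c'" and "c' < n"
  shows "\<exists>i<n. (c + i * p) div n < (c' + i * p) div n"
proof -
  have "n - c' \<in> (\<lambda>i. i * p mod n) ` {..<n}"
    using bij_betw_imp_surj_on[OF bij_betw_mult_mod[OF assms(1)]] assms(2,3) by auto
  then obtain i where i: "i < n" "i * p mod n = n - c'" by auto
  have "(c' + i * p) mod n = (c' + i * p mod n) mod n" by (simp add: mod_add_right_eq)
  also have "\<dots> = 0" using i(2) assms(2,3) by simp
  finally have "c' + i * p = n * ((c' + i * p) div n)"
    using mult_div_mod_eq[of n "c' + i * p"] by simp
  then have "c + i * p < n * ((c' + i * p) div n)" using assms(2) by linarith
  then show ?thesis using i(1) by (auto simp: less_mult_imp_div_less mult.commute)
qed

lemma lex_lt_mechanical_word: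
  assumes "p \<le> n" and "coprime p n" and "c < c'" and "c' < n"
  shows "lex_lt (mechanical_word p n c) (mechanical_word p n c')"
proof -
  obtain i where "i < n" "(c + i * p) div n < (c' + i * p) div n"
    using ex_div_less_div[OF assms(2-4)] by blast
  moreover have "(c' + Suc j * p) div n \<le> Suc ((c' + j * p) div n)" for j
    using div_add_le_Suc_div[OF assms(1), of "c' + j * p"] by (simp add: algebra_simps)
  ultimately show ?thesis unfolding mechanical_word_def
    using assms(3,4)
    by (intro lex_lt_jump_word[where i = i]) (auto simp: mono_def div_le_mono)
qed

lemma lex_lt_irrefl: "\<not> lex_lt xs xs"
  by (induction xs) auto

lemma lex_lt_asym: "lex_lt xs ys \<Longrightarrow> \<not> lex_lt ys xs"
  by (induction xs ys rule: lex_lt.induct) auto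

lemma lex_lt_mechanical_word_iff:
  assumes "p \<le> n" and "coprime p n" and "c < n" and "c' < n"
  shows "lex_lt (mechanical_word p n c) (mechanical_word p n c') \<longleftrightarrow> c < c'"
  using lex_lt_mechanical_word[OF assms(1,2)] assms(3,4) lex_lt_irrefl lex_lt_asym
  by (metis linorder_neqE_nat)

lemma rank_mechanical_word:
  assumes "p \<le> n" and "coprime p n"
  shows "rank (mechanical_word p n 0) k = Suc (k * p mod n)"
proof -
  have "0 < n" using assms by (cases n) auto
  then have "lex_lt (rotate i (mechanical_word p n 0)) (rotate k (mechanical_word p n 0))
      \<longleftrightarrow> i * p mod n < k * p mod n" for i
    using lex_lt_mechanical_word_iff[OF assms, of "i * p mod n" "k * p mod n"]
    by (simp add: rotate_mechanical_word mechanical_word_mod)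
  then show ?thesis
    using card_bij_betw_less[OF bij_betw_mult_mod[OF assms(2)], of "k * p mod n"] \<open>0 < n\<close>
    by (simp add: rank_def)
qed

text \<open>After m letters of the Christoffel word, t of them equal to B, the substituted word has
  length m + t, and the floor of jp/(p + q) equals t at j = m + t and j = m + t + 1.\<close>
lemma div_add_denominator_eq:
  fixes m p q t :: nat
  assumes "t * q \<le> m * p" and "m * p < Suc t * q"
  shows "(m + t) * p div (p + q) = t" and "Suc (m + t) * p div (p + q) = t"
  using assms by (auto intro!: div_nat_eqI simp: algebra_simps)

lemma div_add_denominator_eq_Suc:
  fixes m p q t :: nat
  assumes "Suc t * q \<le> Suc m * p" and "m * p < Suc t * q"
  shows "Suc (Suc (m + t)) * p div (p + q) = Suc t"
  using assms by (auto intro!: div_nat_eqI simp: algebra_simps)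

lemma ch_LLR_prefix:
  fixes p q m :: nat
  assumes "p \<le> q" and "m \<le> q"
  shows "concat (map (\<lambda>x. case x of A \<Rightarrow> [L] | B \<Rightarrow> [L, R]) (take m (christoffel p q)))
    = jump_word (\<lambda>j. j * p div (p + q)) (m + m * p div q)"
  using assms(2)
proof (induction m)
  case 0
  show ?case by (simp add: jump_word_def)
next
  case (Suc m)
  define t where "t = m * p div q"
  have "0 < q" using Suc.prems by simp
  then have t: "t * q \<le> m * p" "m * p < Suc t * q"
    unfolding t_def using dividend_less_div_times[of q "m * p"] by simp_all
  have IH: "concat (map (\<lambda>x. case x of A \<Rightarrow> [L] | B \<Rightarrow> [L, R]) (take m (christoffel p q)))
      = jump_word (\<lambda>j. j * p div (p + q)) (m + t)"
    using Suc by (simp add: t_def)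
  have take: "take (Suc m) (christoffel p q) = take m (christoffel p q) @ [christoffel p q ! m]"
    using Suc.prems by (intro take_Suc_conv_app_nth) (simp add: christoffel_def)
  have letter: "christoffel p q ! m = (if t < Suc m * p div q then B else A)"
    using Suc.prems by (simp add: christoffel_def t_def del: upt_Suc)
  have "Suc m * p div q \<le> Suc t"
    using div_add_le_Suc_div[OF assms(1), of "m * p"] unfolding t_def by (simp add: add.commute)
  moreover have "t \<le> Suc m * p div q" unfolding t_def by (simp add: div_le_mono)
  ultimately consider "Suc m * p div q = t" | "Suc m * p div q = Suc t" by linarith
  then show ?case
  proof cases
    case 1
    then have "Suc m + Suc m * p div q = Suc (m + t)" by simp
    then show ?thesis
      unfolding take letter 1 using IH div_add_denominator_eq[OF t] by (simp add: jump_word_Suc)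
  next
    case 2
    then have "Suc t * q \<le> Suc m * p" by (metis div_times_less_eq_dividend)
    moreover have "Suc m + Suc m * p div q = Suc (Suc (m + t))" using 2 by simp
    ultimately show ?thesis
      unfolding take letter 2
      using IH div_add_denominator_eq[OF t] div_add_denominator_eq_Suc[OF _ t(2)]
      by (simp add: jump_word_Suc)
  qed
qed

lemma ch_LLR_eq_mechanical_word:
  assumes "p \<le> q" and "0 < q"
  shows "ch_LLR p q = mechanical_word p (p + q) 0"
  using ch_LLR_prefix[OF assms(1) order_refl] assms(2)
  by (simp add: ch_LLR_def christoffel_def mechanical_word_def add.commute)

lemma straight_braid_cong:
  assumes "\<And>s t. s \<in> S \<Longrightarrow> t \<in> S \<Longrightarrow> over s t \<longleftrightarrow> over' s t"
  shows "straight_braid n S over = straight_braid n S over'"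
  using assms unfolding straight_braid_def by blast

lemma modular_braid_threshold:
  assumes "\<And>k. k < length W \<Longrightarrow> hd (rotate k W) = L \<longleftrightarrow> rank W k \<le> q"
  shows "modular_braid W = straight_braid (length W)
     {(rank W k, rank W (Suc k mod length W)) | k. k < length W} (\<lambda>s t. fst s \<le> q \<and> q < fst t)"
proof -
  have "hd (rotate k W) = R \<longleftrightarrow> q < rank W k" if "k < length W" for k
    using assms[OF that] by (cases "hd (rotate k W)") auto
  with assms show ?thesis
    unfolding modular_braid_def by (intro straight_braid_cong) fastforce
qed

lemma hd_rotate_mechanical_word:
  assumes "coprime p q"
  shows "hd (rotate k (mechanical_word p (p + q) 0)) = L
    \<longleftrightarrow> rank (mechanical_word p (p + q) 0) k \<le> q"
proof -
  have "0 < p + q" using assms by (cases "p + q") auto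
  moreover have "coprime p (p + q)" using assms by (simp add: coprime_iff_gcd_eq_1)
  ultimately show ?thesis
    by (simp add: rotate_mechanical_word hd_mechanical_word rank_mechanical_word)
qed

lemma lorenz_strands_eq_image:
  fixes p q :: nat
  shows "(\<lambda>c. (Suc c, Suc ((c + p) mod (p + q)))) ` {..<p + q}
    = {(i, p + i) | i. 1 \<le> i \<and> i \<le> q} \<union> {(q + i, i) | i. 1 \<le> i \<and> i \<le> p}"
proof -
  have "{..<p + q} = {0..<q} \<union> plus q ` {0..<p}"
    using ivl_disj_un_one(2)[of q "p + q"] by (simp add: add.commute lessThan_atLeast0)
  moreover have "(\<lambda>c. (Suc c, Suc ((c + p) mod (p + q)))) ` {0..<q}
      = (\<lambda>i. (i, p + i)) ` Suc ` {0..<q}"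
    unfolding image_image by (intro image_cong) auto
  moreover have "(\<lambda>c. (Suc c, Suc ((c + p) mod (p + q)))) ` plus q ` {0..<p}
      = (\<lambda>i. (q + i, i)) ` Suc ` {0..<p}"
    unfolding image_image by (intro image_cong) (auto simp: add.commute[of q] add.assoc)
  ultimately show ?thesis
    by (auto simp: image_Un atLeastLessThanSuc_atLeastAtMost)
qed

lemma strands_mechanical_word:
  assumes "coprime p q"
  shows "{(rank (mechanical_word p (p + q) 0) k,
           rank (mechanical_word p (p + q) 0) (Suc k mod length (mechanical_word p (p + q) 0)))
          | k. k < length (mechanical_word p (p + q) 0)}
    = {(i, p + i) | i. 1 \<le> i \<and> i \<le> q} \<union> {(q + i, i) | i. 1 \<le> i \<and> i \<le> p}"
proof -
  let ?n = "p + q"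
  have cop: "coprime p ?n" using assms by (simp add: coprime_iff_gcd_eq_1)
  have "Suc k mod ?n * p mod ?n = (k * p mod ?n + p) mod ?n" for k
    by (simp add: mod_simps add.commute)
  then have "{(rank (mechanical_word p ?n 0) k, rank (mechanical_word p ?n 0) (Suc k mod ?n))
        | k. k < ?n}
      = (\<lambda>c. (Suc c, Suc ((c + p) mod ?n))) ` ((\<lambda>k. k * p mod ?n) ` {..<?n})"
    by (auto simp: rank_mechanical_word[OF _ cop])
  also have "\<dots> = (\<lambda>c. (Suc c, Suc ((c + p) mod ?n))) ` {..<?n}"
    using bij_betw_imp_surj_on[OF bij_betw_mult_mod[OF cop]] by simp
  finally show ?thesis by (simp add: lorenz_strands_eq_image)
qed

theorem theorem4p2:
  fixes p q :: nat
  assumes "0 < p" and "p < q" and "coprime p q"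
  shows "modular_braid (ch_LLR p q) = lorenz_braid p q"
proof -
  have "ch_LLR p q = mechanical_word p (p + q) 0"
    using assms(2) by (intro ch_LLR_eq_mechanical_word) auto
  then show ?thesis
    using modular_braid_threshold[OF hd_rotate_mechanical_word[OF assms(3)]]
      strands_mechanical_word[OF assms(3)]
    by (simp add: lorenz_braid_def)
qed

end
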